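(* Consider an environment $W$ containing a set of static sensors (closed disks at fixed positions) and a set of mobile sensors $ms_1,\ldots,ms_m$ with (possibly different) sensing radii, and let the covered area be the area of the part of $W$ covered by the union of all sensor disks. The greedy algorithm Greedy-HHP, which for $i=1,\ldots,m$ in turn moves mobile sensor $ms_i$ to the position (over the holes) that maximizes the covered area given the static sensors and the already placed mobile sensors $ms_1,\ldots,ms_{i-1}$, and then updates the holes, achieves an approximation ratio of $1/2$ for the problem of maximizing the covered area by moving the mobile sensors; i.e., the covered area it achieves is at least half of the maximum achievable covered area.
   Context: A hole is a maximal region of $W$ (outside obstacles, if any) not covered by any sensor disk. The hole healing problem asks to choose new positions for the mobile sensors so as to maximize the covered area of $W$ (equivalently, recover as much hole area as possible). *)

theory Defs
  imports "HOL-Analysis.Analysis"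
begin

type_synonym point = "real^2"

definition static_cover :: "(point \<times> real) set \<Rightarrow> point set" where
  "static_cover S = (\<Union>(c, s)\<in>S. cball c s)"

definition covered_area ::
  "point set \<Rightarrow> (point \<times> real) set \<Rightarrow> (nat \<Rightarrow> real) \<Rightarrow> (nat \<Rightarrow> point) \<Rightarrow> nat \<Rightarrow> real" where
  "covered_area W S r p k =
     measure lebesgue (W \<inter> (static_cover S \<union> (\<Union>i<k. cball (p i) (r i))))"

text \<open>Greedy-HHP output: for each i < m, the position g i of mobile sensor i is a candidate
  position maximizing the covered area given the static sensors and the already placed
  mobile sensors 0..i-1.\<close>
definition greedy_placement ::
  "point set \<Rightarrow> (point \<times> real) set \<Rightarrow> (nat \<Rightarrow> real) \<Rightarrow> point set \<Rightarrow> nat \<Rightarrow> (nat \<Rightarrow> point) \<Rightarrow> bool" where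
  "greedy_placement W S r C m g \<longleftrightarrow>
     (\<forall>i<m. g i \<in> C \<and>
        (\<forall>x\<in>C. covered_area W S r (g(i := x)) (Suc i) \<le> covered_area W S r g (Suc i)))"

end

theory Submission
  imports Defs
begin

text \<open>Compare the greedy cover \<open>E\<^sub>i\<close> after \<open>i\<close> steps with an arbitrary placement \<open>p\<close>.
  Had the greedy algorithm put sensor \<open>i\<close> at \<open>p\<^sub>i\<close>, it would have gained the area of the disk
  \<open>P\<^sub>i\<close> around \<open>p\<^sub>i\<close> outside \<open>E\<^sub>i\<close>; its actual gain \<open>|E\<^sub>i\<^sub>+\<^sub>1| - |E\<^sub>i|\<close> is at least that.
  Since the \<open>E\<^sub>i\<close> increase, the cover of \<open>p\<close> lies in \<open>E\<^sub>m\<close> together with the sets \<open>P\<^sub>i - E\<^sub>i\<close>,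
  so its area is at most \<open>|E\<^sub>m| + \<Sum>\<^sub>i (|E\<^sub>i\<^sub>+\<^sub>1| - |E\<^sub>i|) \<le> 2 |E\<^sub>m|\<close>.\<close>

lemma measure_Un_UN_le_incseq:
  assumes "incseq E" and "\<And>i. i \<le> m \<Longrightarrow> E i \<in> sets M" and "\<And>i. i < m \<Longrightarrow> P i \<in> sets M"
  shows "measure M (E m \<union> (\<Union>i<m. P i)) \<le> measure M (E m) + (\<Sum>i<m. measure M (P i - E i))"
proof -
  have "E i \<subseteq> E m" if "i < m" for i
    using \<open>incseq E\<close> that by (simp add: incseq_def)
  then have "E m \<union> (\<Union>i<m. P i) = E m \<union> (\<Union>i<m. P i - E i)"
    by blast
  also have "measure M \<dots> \<le> measure M (E m) + measure M (\<Union>i<m. P i - E i)"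
    using assms(2,3) by (intro measure_Un_le) auto
  also have "measure M (\<Union>i<m. P i - E i) \<le> (\<Sum>i<m. measure M (P i - E i))"
    using assms(2,3) by (intro measure_UNION_le) auto
  finally show ?thesis
    by simp
qed

lemma greedy_measure_le:
  assumes "incseq E" and E: "\<And>i. i \<le> m \<Longrightarrow> E i \<in> fmeasurable M"
    and P: "\<And>i. i < m \<Longrightarrow> P i \<in> fmeasurable M"
    and gain: "\<And>i. i < m \<Longrightarrow> measure M (E i \<union> P i) \<le> measure M (E (Suc i))"
    and T: "T \<subseteq> E m \<union> (\<Union>i<m. P i)" "T \<in> sets M"
  shows "measure M T \<le> 2 * measure M (E m) - measure M (E 0)"
proof -
  have "E m \<union> (\<Union>i<m. P i) \<in> fmeasurable M"
    using E P by (intro fmeasurable.Un fmeasurable.finite_UN) auto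
  then have "measure M T \<le> measure M (E m \<union> (\<Union>i<m. P i))"
    using T by (intro measure_mono_fmeasurable)
  also have "\<dots> \<le> measure M (E m) + (\<Sum>i<m. measure M (P i - E i))"
    using \<open>incseq E\<close> E P by (intro measure_Un_UN_le_incseq) auto
  also have "(\<Sum>i<m. measure M (P i - E i)) \<le> (\<Sum>i<m. measure M (E (Suc i)) - measure M (E i))"
  proof (intro sum_mono)
    fix i assume "i \<in> {..<m}"
    then have "measure M (E i \<union> P i) = measure M (E i) + measure M (P i - E i)"
      using E P by (intro measure_Un2) auto
    then show "measure M (P i - E i) \<le> measure M (E (Suc i)) - measure M (E i)"
      using gain \<open>i \<in> {..<m}\<close> by fastforce
  qed
  also have "\<dots> = measure M (E m) - measure M (E 0)"
    by (rule sum_lessThan_telescope)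
  finally show ?thesis
    by simp
qed

definition covered_set ::
  "point set \<Rightarrow> (point \<times> real) set \<Rightarrow> (nat \<Rightarrow> real) \<Rightarrow> (nat \<Rightarrow> point) \<Rightarrow> nat \<Rightarrow> point set" where
  "covered_set W S r p k = W \<inter> (static_cover S \<union> (\<Union>i<k. cball (p i) (r i)))"

lemma covered_area_eq_measure: "covered_area W S r p k = measure lebesgue (covered_set W S r p k)"
  unfolding covered_area_def covered_set_def ..

lemma closed_static_cover: "finite S \<Longrightarrow> closed (static_cover S)"
  unfolding static_cover_def by (intro closed_UN) auto

lemma covered_set_lmeasurable:
  assumes "W \<in> sets lebesgue" and "bounded W" and "finite S"
  shows "covered_set W S r p k \<in> lmeasurable"
proof (rule bounded_set_imp_lmeasurable)
  have "closed (static_cover S \<union> (\<Union>i<k. cball (p i) (r i)))"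
    using closed_static_cover[OF \<open>finite S\<close>] by (intro closed_Un closed_UN) auto
  then show "covered_set W S r p k \<in> sets lebesgue"
    unfolding covered_set_def using \<open>W \<in> sets lebesgue\<close> by (intro sets.Int) (auto intro: borel_closed)
  show "bounded (covered_set W S r p k)"
    unfolding covered_set_def using \<open>bounded W\<close> by (rule bounded_subset) auto
qed

lemma incseq_covered_set: "incseq (covered_set W S r p)"
  unfolding incseq_def covered_set_def by auto

lemma covered_set_Suc:
  "covered_set W S r p (Suc i) = covered_set W S r p i \<union> (W \<inter> cball (p i) (r i))"
  unfolding covered_set_def lessThan_Suc by auto

lemma covered_set_fun_upd: "covered_set W S r (p(i := x)) i = covered_set W S r p i"
  unfolding covered_set_def by auto

lemma covered_set_subset_Un_disks:
  "covered_set W S r p m \<subseteq> covered_set W S r q m \<union> (\<Union>i<m. W \<inter> cball (p i) (r i))"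
  unfolding covered_set_def by auto

theorem theorem2:
  fixes W :: "(real^2) set" and S :: "((real^2) \<times> real) set"
    and r :: "nat \<Rightarrow> real" and C :: "(real^2) set" and m :: nat
    and g :: "nat \<Rightarrow> real^2"
  assumes "W \<in> sets lebesgue" and "bounded W"
    and "finite S" and "\<forall>(c, s)\<in>S. s > 0"
    and "\<forall>i<m. r i > 0"
    and "greedy_placement W S r C m g"
  shows "\<forall>p. (\<forall>i<m. p i \<in> C) \<longrightarrow>
           covered_area W S r g m \<ge> (1/2) * covered_area W S r p m"
proof (intro allI impI)
  fix p assume "\<forall>i<m. p i \<in> C"
  let ?E = "covered_set W S r g" and ?P = "\<lambda>i. W \<inter> cball (p i) (r i)"
  have lmeas: "covered_set W S r q k \<in> lmeasurable" for q k
    using covered_set_lmeasurable assms(1-3) by blast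
  have "?P i \<in> lmeasurable" for i
    using assms(1,2) by (intro bounded_set_imp_lmeasurable) (auto intro: bounded_subset)
  moreover have "measure lebesgue (?E i \<union> ?P i) \<le> measure lebesgue (?E (Suc i))" if "i < m" for i
    using assms(6) \<open>\<forall>i<m. p i \<in> C\<close> that
    unfolding greedy_placement_def covered_area_eq_measure covered_set_Suc covered_set_fun_upd
    by (metis fun_upd_same)
  ultimately have "measure lebesgue (covered_set W S r p m)
      \<le> 2 * measure lebesgue (?E m) - measure lebesgue (?E 0)"
    using lmeas covered_set_subset_Un_disks
    by (intro greedy_measure_le incseq_covered_set fmeasurableD)
  then show "covered_area W S r g m \<ge> (1/2) * covered_area W S r p m"
    using measure_nonneg[of lebesgue "?E 0"] unfolding covered_area_eq_measure by linarith
qed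

end
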